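(* Every extended ADE curve $C$ is numerically $2$-connected: for every decomposition $C=A+B$ into nonzero effective divisors $A,B$ one has $A\cdot B\ge2$.
   Context: Work over $\mathbb C$. Let $X$ be a smooth projective surface and $C=\sum_{v\in V}m_vC_v\subset X$ an effective divisor with smooth irreducible components $C_v$, at most two through any point, meeting transversally (for $x\in C_v\cap C_w$, $(m_vC_v)\cap(m_wC_w)$ has local ring $\mathbb C[u,t]/(u^{m_v},t^{m_w})$). The labelled intersection graph $\Gamma$ has vertex set $V$, one edge per intersection point, label $m_v$. $C$ is an \emph{extended ADE curve} if (1) $\Gamma$ is one of: $\tilde A_n$: a cycle of $n+1$ vertices (two vertices, two edges if $n=1$), all labels $1$; $\tilde D_n$ ($n\ge4$): a chain of $n-3$ label-$2$ vertices with two label-$1$ vertices attached to each end (for $n=4$, one label-$2$ vertex with four label-$1$ neighbours); $\tilde E_6$: central label-$3$ vertex with three arms (label $2$ then $1$); $\tilde E_7$: chain $1,2,3,4,3,2,1$ plus a label-$2$ vertex on the label-$4$ vertex; $\tilde E_8$: chain $2,4,6,5,4,3,2,1$ plus a label-$3$ vertex on the label-$6$ vertex; (2) each $C_i$ with $m_i\ge2$ is a smooth rational $(-2)$-curve. *)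

theory Defs
  imports Main
begin

text \<open>A labelled multigraph on vertices 0..<length labels, given by a list of labels and a
  list of edges (one entry per intersection point).\<close>

definition edge_count :: "(nat \<times> nat) list \<Rightarrow> nat \<Rightarrow> nat \<Rightarrow> nat" where
  "edge_count es i j = length (filter (\<lambda>p. p = (i, j) \<or> p = (j, i)) es)"

definition tA :: "nat \<Rightarrow> nat list \<times> (nat \<times> nat) list" where
  "tA n = (replicate (n + 1) 1, map (\<lambda>i. (i, (i + 1) mod (n + 1))) [0..<n + 1])"

definition tD :: "nat \<Rightarrow> nat list \<times> (nat \<times> nat) list" where
  "tD n = (replicate (n - 3) 2 @ [1, 1, 1, 1],
           map (\<lambda>i. (i, i + 1)) [0..<n - 4] @
           [(0, n - 3), (0, n - 2), (n - 4, n - 1), (n - 4, n)])"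

definition tE6 :: "nat list \<times> (nat \<times> nat) list" where
  "tE6 = ([3, 2, 1, 2, 1, 2, 1], [(0,1), (1,2), (0,3), (3,4), (0,5), (5,6)])"

definition tE7 :: "nat list \<times> (nat \<times> nat) list" where
  "tE7 = ([1, 2, 3, 4, 3, 2, 1, 2], [(0,1), (1,2), (2,3), (3,4), (4,5), (5,6), (3,7)])"

definition tE8 :: "nat list \<times> (nat \<times> nat) list" where
  "tE8 = ([2, 4, 6, 5, 4, 3, 2, 1, 3],
          [(0,1), (1,2), (2,3), (3,4), (4,5), (5,6), (6,7), (2,8)])"

definition extended_ADE_graph :: "nat list \<times> (nat \<times> nat) list \<Rightarrow> bool" where
  "extended_ADE_graph G \<longleftrightarrow>
     (\<exists>n\<ge>1. G = tA n) \<or> (\<exists>n\<ge>4. G = tD n) \<or> G = tE6 \<or> G = tE7 \<or> G = tE8"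

text \<open>Intersection data of the curve C = sum m_v C_v: components indexed by V,
  multiplicities m, number of intersection points e v w of C_v and C_w (v \<noteq> w),
  and self-intersections s v = C_v^2.  The labelled intersection graph is isomorphic
  to one of the extended ADE graphs, and components of multiplicity \<ge> 2 are (-2)-curves.\<close>

definition extended_ADE_curve ::
  "'v set \<Rightarrow> ('v \<Rightarrow> nat) \<Rightarrow> ('v \<Rightarrow> 'v \<Rightarrow> nat) \<Rightarrow> ('v \<Rightarrow> int) \<Rightarrow> bool" where
  "extended_ADE_curve V m e s \<longleftrightarrow> finite V \<and>
     (\<exists>G f. extended_ADE_graph G \<and> bij_betw f V {0..<length (fst G)} \<and>
        (\<forall>v\<in>V. m v = fst G ! f v) \<and>
        (\<forall>v\<in>V. \<forall>w\<in>V. v \<noteq> w \<longrightarrow> e v w = edge_count (snd G) (f v) (f w))) \<and>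
     (\<forall>v\<in>V. m v \<ge> 2 \<longrightarrow> s v = -2)"

definition inter_num ::
  "'v set \<Rightarrow> ('v \<Rightarrow> 'v \<Rightarrow> nat) \<Rightarrow> ('v \<Rightarrow> int) \<Rightarrow> ('v \<Rightarrow> nat) \<Rightarrow> ('v \<Rightarrow> nat) \<Rightarrow> int" where
  "inter_num V e s A B =
     (\<Sum>v\<in>V. \<Sum>w\<in>V. int (A v) * int (B w) * (if v = w then s v else int (e v w)))"

end

theory Submission
  imports Defs Complex_Main
begin

(* Write A = sum a_v C_v and B = sum b_v C_v.  A component with a_v b_v > 0 has multiplicity
   at least 2, hence is a (-2)-curve, so A.B is computed by the matrix E - 2I, where E is the
   adjacency matrix of the dual graph.  The multiplicities satisfy E m = 2 m, so substituting
   b = m - a gives A.B = 2 sum a_v^2 - a^T E a.  This number is even, because E is symmetric with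
   zero diagonal, and by the ground-state identity

     2 sum a_v^2 - a^T E a = 1/2 sum_(v,w) E_vw m_v m_w (a_v / m_v - a_w / m_w)^2

   it is nonnegative and vanishes only if a / m is constant along edges, hence constant on the
   connected graph.  Since some m_k = 1, the constant is 0 or 1, that is A = 0 or B = 0. *)

section \<open>Symmetric matrices with a positive eigenvector\<close>

lemma ground_state_representation:
  fixes E :: "'i \<Rightarrow> 'i \<Rightarrow> 'a::field" and m x :: "'i \<Rightarrow> 'a"
  assumes "finite I" and sym: "\<And>i j. E i j = E j i"
    and nz: "\<And>i. i \<in> I \<Longrightarrow> m i \<noteq> 0"
    and eigen: "\<And>i. i \<in> I \<Longrightarrow> (\<Sum>j\<in>I. E i j * m j) = c * m i"
  shows "(\<Sum>i\<in>I. \<Sum>j\<in>I. E i j * m i * m j * (x i / m i - x j / m j)\<^sup>2)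
         = 2 * (c * (\<Sum>i\<in>I. (x i)\<^sup>2) - (\<Sum>i\<in>I. \<Sum>j\<in>I. E i j * x i * x j))"
proof -
  define h where "h i = (x i)\<^sup>2 / m i" for i
  have expand: "E i j * m i * m j * (x i / m i - x j / m j)\<^sup>2
      = E i j * m j * h i + E j i * m i * h j - 2 * (E i j * x i * x j)" if "i \<in> I" "j \<in> I" for i j
    using nz[OF that(1)] nz[OF that(2)] sym[of i j]
    by (simp add: h_def field_simps power2_eq_square)
  have diag: "(\<Sum>i\<in>I. \<Sum>j\<in>I. E i j * m j * h i) = c * (\<Sum>i\<in>I. (x i)\<^sup>2)"
  proof -
    have "(\<Sum>i\<in>I. \<Sum>j\<in>I. E i j * m j * h i) = (\<Sum>i\<in>I. c * m i * h i)"
      by (simp add: eigen flip: sum_distrib_right)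
    also have "\<dots> = c * (\<Sum>i\<in>I. (x i)\<^sup>2)"
      by (simp add: h_def nz sum_distrib_left power2_eq_square)
    finally show ?thesis .
  qed
  have "(\<Sum>i\<in>I. \<Sum>j\<in>I. E i j * m i * m j * (x i / m i - x j / m j)\<^sup>2)
      = (\<Sum>i\<in>I. \<Sum>j\<in>I. E i j * m j * h i) + (\<Sum>i\<in>I. \<Sum>j\<in>I. E j i * m i * h j)
        - 2 * (\<Sum>i\<in>I. \<Sum>j\<in>I. E i j * x i * x j)"
    by (simp add: expand sum.distrib sum_subtractf sum_distrib_left)
  also have "(\<Sum>i\<in>I. \<Sum>j\<in>I. E j i * m i * h j) = (\<Sum>i\<in>I. \<Sum>j\<in>I. E i j * m j * h i)"
    by (rule sum.swap)
  also have "(\<Sum>i\<in>I. \<Sum>j\<in>I. E i j * m j * h i) + (\<Sum>i\<in>I. \<Sum>j\<in>I. E i j * m j * h i)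
        - 2 * (\<Sum>i\<in>I. \<Sum>j\<in>I. E i j * x i * x j)
      = 2 * (c * (\<Sum>i\<in>I. (x i)\<^sup>2) - (\<Sum>i\<in>I. \<Sum>j\<in>I. E i j * x i * x j))"
    unfolding diag by (simp add: algebra_simps)
  finally show ?thesis .
qed

lemma quadratic_form_le_eigenvalue:
  fixes E :: "'i \<Rightarrow> 'i \<Rightarrow> 'a::linordered_field" and m x :: "'i \<Rightarrow> 'a"
  assumes "finite I" and "\<And>i j. E i j = E j i" and nonneg: "\<And>i j. 0 \<le> E i j"
    and pos: "\<And>i. i \<in> I \<Longrightarrow> 0 < m i"
    and "\<And>i. i \<in> I \<Longrightarrow> (\<Sum>j\<in>I. E i j * m j) = c * m i"
  shows "(\<Sum>i\<in>I. \<Sum>j\<in>I. E i j * x i * x j) \<le> c * (\<Sum>i\<in>I. (x i)\<^sup>2)"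
proof -
  have "0 \<le> (\<Sum>i\<in>I. \<Sum>j\<in>I. E i j * m i * m j * (x i / m i - x j / m j)\<^sup>2)"
    using nonneg pos by (intro sum_nonneg) (simp add: less_imp_le)
  then show ?thesis
    using ground_state_representation[of I E m c x] assms
    by (simp add: dual_order.strict_implies_not_eq)
qed

lemma quadratic_form_eq_eigenvalue_imp_proportional:
  fixes E :: "'i \<Rightarrow> 'i \<Rightarrow> 'a::linordered_field" and m x :: "'i \<Rightarrow> 'a"
  assumes "finite I" and "\<And>i j. E i j = E j i" and nonneg: "\<And>i j. 0 \<le> E i j"
    and pos: "\<And>i. i \<in> I \<Longrightarrow> 0 < m i"
    and "\<And>i. i \<in> I \<Longrightarrow> (\<Sum>j\<in>I. E i j * m j) = c * m i"
    and "(\<Sum>i\<in>I. \<Sum>j\<in>I. E i j * x i * x j) = c * (\<Sum>i\<in>I. (x i)\<^sup>2)"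
    and "i \<in> I" "j \<in> I" "E i j \<noteq> 0"
  shows "x i / m i = x j / m j"
proof -
  let ?t = "\<lambda>i j. E i j * m i * m j * (x i / m i - x j / m j)\<^sup>2"
  have t_nonneg: "0 \<le> ?t i j" if "i \<in> I" "j \<in> I" for i j
    using nonneg pos that by (simp add: less_imp_le)
  have "(\<Sum>i\<in>I. \<Sum>j\<in>I. ?t i j) = 0"
    using ground_state_representation[of I E m c x] assms
    by (simp add: dual_order.strict_implies_not_eq)
  then have "?t i j = 0"
    using t_nonneg \<open>finite I\<close> \<open>i \<in> I\<close> \<open>j \<in> I\<close>
    by (simp add: sum_nonneg sum_nonneg_eq_0_iff)
  then show ?thesis
    using pos[OF \<open>i \<in> I\<close>] pos[OF \<open>j \<in> I\<close>] \<open>E i j \<noteq> 0\<close> by simp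
qed

lemma even_double_sum_symmetric:
  fixes Q :: "'i \<Rightarrow> 'i \<Rightarrow> 'a::comm_semiring_1"
  assumes "finite I" and sym: "\<And>i j. Q i j = Q j i" and diag: "\<And>i. Q i i = 0"
  shows "2 dvd (\<Sum>i\<in>I. \<Sum>j\<in>I. Q i j)"
  using \<open>finite I\<close>
proof (induction I rule: finite_induct)
  case empty
  then show ?case by simp
next
  case (insert k F)
  have "(\<Sum>i\<in>insert k F. \<Sum>j\<in>insert k F. Q i j)
      = 2 * (\<Sum>j\<in>F. Q k j) + (\<Sum>i\<in>F. \<Sum>j\<in>F. Q i j)"
    using insert.hyps by (simp add: diag sum.distrib mult_2 sym[of _ k] add_ac)
  then show ?case
    using insert.IH by simp
qed

lemma pairing_of_complement:
  fixes E :: "'i \<Rightarrow> 'i \<Rightarrow> 'a::comm_ring_1" and m a b :: "'i \<Rightarrow> 'a"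
  assumes "finite I" and null: "\<And>i. i \<in> I \<Longrightarrow> (\<Sum>j\<in>I. E i j * m j) = 2 * m i"
    and split: "\<And>i. i \<in> I \<Longrightarrow> a i + b i = m i"
  shows "(\<Sum>i\<in>I. \<Sum>j\<in>I. a i * b j * (E i j - (if i = j then 2 else 0)))
         = 2 * (\<Sum>i\<in>I. (a i)\<^sup>2) - (\<Sum>i\<in>I. \<Sum>j\<in>I. E i j * a i * a j)"
proof -
  have inner: "(\<Sum>j\<in>I. a i * b j * (E i j - (if i = j then 2 else 0)))
      = 2 * (a i)\<^sup>2 - (\<Sum>j\<in>I. E i j * a i * a j)" if "i \<in> I" for i
  proof -
    have b: "b j = m j - a j" if "j \<in> I" for j
      using split[OF that] by (simp add: algebra_simps)
    have "(\<Sum>j\<in>I. a i * b j * (E i j - (if i = j then 2 else 0)))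
        = (\<Sum>j\<in>I. E i j * a i * b j) - 2 * a i * b i"
      using \<open>finite I\<close> \<open>i \<in> I\<close>
      by (simp add: right_diff_distrib sum_subtractf if_distrib[of "\<lambda>t. _ * t"] sum.delta
          mult_ac)
    also have "(\<Sum>j\<in>I. E i j * a i * b j) = a i * (\<Sum>j\<in>I. E i j * m j) - (\<Sum>j\<in>I. E i j * a i * a j)"
      by (simp add: b right_diff_distrib sum_subtractf sum_distrib_left mult_ac cong: sum.cong)
    also have "a i * (\<Sum>j\<in>I. E i j * m j) - (\<Sum>j\<in>I. E i j * a i * a j) - 2 * a i * b i
        = 2 * (a i)\<^sup>2 - (\<Sum>j\<in>I. E i j * a i * a j)"
      using null[OF \<open>i \<in> I\<close>] split[OF \<open>i \<in> I\<close>, symmetric]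
      by (simp add: algebra_simps power2_eq_square)
    finally show ?thesis .
  qed
  show ?thesis
    by (simp add: inner sum_subtractf sum_distrib_left cong: sum.cong)
qed

section \<open>Connected graphs\<close>

definition graph_connected :: "'i set \<Rightarrow> ('i \<Rightarrow> 'i \<Rightarrow> bool) \<Rightarrow> bool" where
  "graph_connected I R \<longleftrightarrow>
     (\<forall>S. (\<forall>i\<in>I. \<forall>j\<in>I. R i j \<longrightarrow> (i \<in> S \<longleftrightarrow> j \<in> S)) \<longrightarrow> (\<forall>i\<in>I. \<forall>j\<in>I. i \<in> S \<longleftrightarrow> j \<in> S))"

lemma graph_connected_imp_eq:
  assumes "graph_connected I R" and "\<And>i j. i \<in> I \<Longrightarrow> j \<in> I \<Longrightarrow> R i j \<Longrightarrow> y i = y j"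
    and "i \<in> I" "j \<in> I"
  shows "y i = y j"
proof -
  let ?S = "{k. y k = y i}"
  have "\<forall>i'\<in>I. \<forall>j'\<in>I. R i' j' \<longrightarrow> (i' \<in> ?S \<longleftrightarrow> j' \<in> ?S)"
    using assms(2) by auto
  with assms(1) have "\<forall>i'\<in>I. \<forall>j'\<in>I. i' \<in> ?S \<longleftrightarrow> j' \<in> ?S"
    unfolding graph_connected_def by (elim allE[of _ ?S] mp)
  then have "j \<in> ?S \<longleftrightarrow> i \<in> ?S"
    using assms(3,4) by blast
  then show ?thesis
    by simp
qed

lemma graph_connected_lessThan_by_parents:
  fixes N :: nat
  assumes parent: "\<forall>i<N. 0 < i \<longrightarrow> (\<exists>j<i. R i j)"
  shows "graph_connected {..<N} R"
  unfolding graph_connected_def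
proof (intro allI impI ballI)
  fix S assume closed: "\<forall>i\<in>{..<N}. \<forall>j\<in>{..<N}. R i j \<longrightarrow> (i \<in> S \<longleftrightarrow> j \<in> S)"
  have root: "i \<in> S \<longleftrightarrow> 0 \<in> S" if "i < N" for i
    using that
  proof (induction i rule: less_induct)
    case (less i)
    show ?case
    proof (cases "i = 0")
      case False
      then obtain j where "j < i" "R i j"
        using parent less.prems by blast
      then have "i \<in> S \<longleftrightarrow> j \<in> S"
        using less.prems by (intro closed[rule_format]) simp_all
      also have "\<dots> \<longleftrightarrow> 0 \<in> S"
        using \<open>j < i\<close> less.prems by (intro less.IH) simp_all
      finally show ?thesis .
    qed simp
  qed
  fix i j assume "i \<in> {..<N}" "j \<in> {..<N}"
  then show "i \<in> S \<longleftrightarrow> j \<in> S"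
    using root[of i] root[of j] by simp
qed

lemma graph_connected_bij_betw:
  assumes f: "bij_betw f V J" and conn: "graph_connected J R"
  shows "graph_connected V (\<lambda>v w. R (f v) (f w))"
  unfolding graph_connected_def
proof (intro allI impI ballI)
  fix S v w
  assume closed: "\<forall>v\<in>V. \<forall>w\<in>V. R (f v) (f w) \<longrightarrow> (v \<in> S \<longleftrightarrow> w \<in> S)" and "v \<in> V" "w \<in> V"
  let ?T = "f ` (S \<inter> V)"
  have mem: "f u \<in> ?T \<longleftrightarrow> u \<in> S" if "u \<in> V" for u
    using that by (simp add: inj_on_image_mem_iff[OF bij_betw_imp_inj_on[OF f]])
  have "(f v \<in> ?T) = (f w \<in> ?T)"
  proof (rule graph_connected_imp_eq[OF conn])
    fix i j assume "i \<in> J" "j \<in> J" "R i j"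
    then obtain v' w' where v': "v' \<in> V" "i = f v'" and w': "w' \<in> V" "j = f w'"
      using f by (metis bij_betw_imp_surj_on imageE)
    have "v' \<in> S \<longleftrightarrow> w' \<in> S"
      using v' w' \<open>R i j\<close> by (intro closed[rule_format]) simp_all
    then show "(i \<in> ?T) = (j \<in> ?T)"
      using mem[OF v'(1)] mem[OF w'(1)] v'(2) w'(2) by simp
  qed (simp_all add: bij_betw_apply[OF f] \<open>v \<in> V\<close> \<open>w \<in> V\<close>)
  then show "v \<in> S \<longleftrightarrow> w \<in> S"
    using mem[OF \<open>v \<in> V\<close>] mem[OF \<open>w \<in> V\<close>] by simp
qed

lemma split_pairing_ge_two:
  fixes E :: "'i \<Rightarrow> 'i \<Rightarrow> nat" and m a b :: "'i \<Rightarrow> nat"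
  assumes "finite I" and sym: "\<And>i j. E i j = E j i" and loopfree: "\<And>i. E i i = 0"
    and null: "\<And>i. i \<in> I \<Longrightarrow> (\<Sum>j\<in>I. E i j * m j) = 2 * m i"
    and pos: "\<And>i. i \<in> I \<Longrightarrow> 0 < m i"
    and conn: "graph_connected I (\<lambda>i j. E i j \<noteq> 0)"
    and reduced: "\<exists>k\<in>I. m k = 1"
    and split: "\<And>i. i \<in> I \<Longrightarrow> a i + b i = m i"
    and a_nonzero: "\<exists>i\<in>I. a i \<noteq> 0" and b_nonzero: "\<exists>i\<in>I. b i \<noteq> 0"
  shows "2 \<le> (\<Sum>i\<in>I. \<Sum>j\<in>I. int (a i) * int (b j) * (int (E i j) - (if i = j then 2 else 0)))"
proof -
  define Q where "Q = (\<Sum>i\<in>I. \<Sum>j\<in>I. int (E i j) * int (a i) * int (a j))"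
  define S where "S = (\<Sum>i\<in>I. (int (a i))\<^sup>2)"
  have pairing: "(\<Sum>i\<in>I. \<Sum>j\<in>I. int (a i) * int (b j) * (int (E i j) - (if i = j then 2 else 0)))
      = 2 * S - Q"
    unfolding Q_def S_def
  proof (rule pairing_of_complement[OF \<open>finite I\<close>])
    show "(\<Sum>j\<in>I. int (E i j) * int (m j)) = 2 * int (m i)" if "i \<in> I" for i
      using arg_cong[OF null[OF that], of int] by simp
    show "int (a i) + int (b i) = int (m i)" if "i \<in> I" for i
      using split[OF that] by simp
  qed
  have "2 dvd Q"
    unfolding Q_def using \<open>finite I\<close> sym loopfree
    by (intro even_double_sum_symmetric) (simp_all add: mult_ac)
  let ?E = "\<lambda>i j. real (E i j)" and ?m = "\<lambda>i. real (m i)" and ?x = "\<lambda>i. real (a i)"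
  have real_Q: "real_of_int Q = (\<Sum>i\<in>I. \<Sum>j\<in>I. ?E i j * ?x i * ?x j)"
    and real_S: "real_of_int S = (\<Sum>i\<in>I. (?x i)\<^sup>2)"
    unfolding Q_def S_def by simp_all
  have real_null: "(\<Sum>j\<in>I. ?E i j * ?m j) = 2 * ?m i" if "i \<in> I" for i
    using arg_cong[OF null[OF that], of real] by simp
  have "Q \<le> 2 * S"
    using quadratic_form_le_eigenvalue[of I ?E ?m 2 ?x] \<open>finite I\<close> sym pos real_null
    unfolding real_Q[symmetric] real_S[symmetric] by simp
  moreover have "Q \<noteq> 2 * S"
  proof
    assume "Q = 2 * S"
    then have proportional: "?x i / ?m i = ?x j / ?m j" if "i \<in> I" "j \<in> I" "E i j \<noteq> 0" for i j
      using quadratic_form_eq_eigenvalue_imp_proportional[of I ?E ?m 2 ?x i j]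
        \<open>finite I\<close> sym pos real_null that
      unfolding real_Q[symmetric] real_S[symmetric] by simp
    obtain k where "k \<in> I" "m k = 1"
      using reduced by blast
    have ratio: "?x i / ?m i = ?x k" if "i \<in> I" for i
    proof -
      have "?x i / ?m i = ?x k / ?m k"
        using graph_connected_imp_eq[OF conn, of "\<lambda>i. ?x i / ?m i"] proportional that \<open>k \<in> I\<close>
        by blast
      then show ?thesis
        using \<open>m k = 1\<close> by simp
    qed
    have "a k \<le> 1"
      using split[OF \<open>k \<in> I\<close>] \<open>m k = 1\<close> by simp
    then consider "a k = 0" | "a k = 1"
      by linarith
    then show False
    proof cases
      case 1
      then have "a i = 0" if "i \<in> I" for i
        using ratio[OF that] pos[OF that] by simp
      then show False
        using a_nonzero by auto
    next
      case 2
      then have "b i = 0" if "i \<in> I" for i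
        using ratio[OF that] pos[OF that] split[OF that] by simp
      then show False
        using b_nonzero by auto
    qed
  qed
  moreover obtain q where "Q = 2 * q"
    using \<open>2 dvd Q\<close> by (rule dvdE)
  ultimately have "q < S"
    by simp
  with \<open>Q = 2 * q\<close> show ?thesis
    unfolding pairing by linarith
qed

section \<open>The extended ADE graphs\<close>

lemma edge_count_commute: "edge_count es i j = edge_count es j i"
  unfolding edge_count_def by metis

lemma edge_count_eq_0_iff: "edge_count es i j = 0 \<longleftrightarrow> (i, j) \<notin> set es \<and> (j, i) \<notin> set es"
  unfolding edge_count_def by (auto simp: filter_empty_conv)

lemma edge_count_self:
  assumes "\<forall>(p, q)\<in>set es. p \<noteq> q"
  shows "edge_count es i i = 0"
  using assms by (auto simp: edge_count_eq_0_iff)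

lemma sum_edge_count_eq_neighbour_sum:
  fixes x :: "nat \<Rightarrow> nat"
  assumes "\<forall>(p, q)\<in>set es. p < N \<and> q < N \<and> p \<noteq> q" and "i < N"
  shows "(\<Sum>j<N. edge_count es i j * x j)
         = (\<Sum>(p, q)\<leftarrow>es. (if p = i then x q else 0) + (if q = i then x p else 0))"
  using assms(1)
proof (induction es)
  case Nil
  then show ?case by (simp add: edge_count_def)
next
  case (Cons pq es)
  obtain p q where pq: "pq = (p, q)" "p < N" "q < N" "p \<noteq> q"
    using Cons.prems by (cases pq) auto
  have "edge_count (pq # es) i j * x j
      = (if j = q then (if p = i then x q else 0) else 0)
        + (if j = p then (if q = i then x p else 0) else 0) + edge_count es i j * x j" for j
    using pq by (auto simp: edge_count_def)
  then have "(\<Sum>j<N. edge_count (pq # es) i j * x j)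
      = (if p = i then x q else 0) + (if q = i then x p else 0) + (\<Sum>j<N. edge_count es i j * x j)"
    using pq by (simp add: sum.distrib)
  then show ?case
    using Cons pq by simp
qed

(* The labels form the null root of the affine Cartan matrix 2I - E, E the adjacency matrix of es. *)
fun null_root_labelling :: "nat list \<times> (nat \<times> nat) list \<Rightarrow> bool" where
  "null_root_labelling (lab, es) \<longleftrightarrow>
     (\<forall>(p, q)\<in>set es. p < length lab \<and> q < length lab \<and> p \<noteq> q) \<and>
     (\<forall>i<length lab. 0 < lab ! i) \<and>
     (\<forall>i<length lab. (\<Sum>j<length lab. edge_count es i j * lab ! j) = 2 * lab ! i) \<and>
     graph_connected {..<length lab} (\<lambda>i j. edge_count es i j \<noteq> 0) \<and>
     (\<exists>i<length lab. lab ! i = 1)"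

lemma null_root_labelling_tE:
  "null_root_labelling tE6" "null_root_labelling tE7" "null_root_labelling tE8"
  unfolding tE6_def tE7_def tE8_def null_root_labelling.simps
  by (intro conjI graph_connected_lessThan_by_parents;
      simp add: edge_count_def numeral_eq_Suc lessThan_Suc All_less_Suc Ex_less_Suc)+

lemma null_root_labelling_tA:
  assumes "1 \<le> n"
  shows "null_root_labelling (tA n)"
proof -
  define succ where "succ k = (k + 1) mod (n + 1)" for k
  define es where "es = map (\<lambda>k. (k, succ k)) [0..<n + 1]"
  have tA: "tA n = (replicate (n + 1) 1, es)"
    by (simp add: tA_def es_def succ_def del: replicate.simps)
  have succ: "succ k = (if k = n then 0 else k + 1)" if "k \<le> n" for k
    using that by (auto simp: succ_def)
  have edges: "\<forall>(p, q)\<in>set es. p < n + 1 \<and> q < n + 1 \<and> p \<noteq> q"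
    using assms by (auto simp: es_def succ)
  have null: "(\<Sum>j<n + 1. edge_count es i j * replicate (n + 1) 1 ! j) = 2 * replicate (n + 1) 1 ! i"
    if "i < n + 1" for i
  proof -
    have pred: "succ k = i \<longleftrightarrow> k = (if i = 0 then n else i - 1)" if "k < n + 1" for k
      using \<open>i < n + 1\<close> that by (auto simp: succ)
    have "(\<Sum>j<n + 1. edge_count es i j * replicate (n + 1) 1 ! j)
        = (\<Sum>j<n + 1. edge_count es i j * 1)"
      by (intro sum.cong refl) (simp del: replicate.simps)
    also have "\<dots> = (\<Sum>(p, q)\<leftarrow>es. (if p = i then 1 else 0) + (if q = i then 1 else 0))"
      by (rule sum_edge_count_eq_neighbour_sum[OF edges that])
    also have "\<dots> = (\<Sum>k<n + 1. (if k = i then 1 else 0) + (if succ k = i then 1 else 0))"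
      by (simp add: es_def interv_sum_list_conv_sum_set_nat lessThan_atLeast0 del: upt_Suc)
    also have "\<dots> = (\<Sum>k<n + 1. (if k = i then 1 else 0)
        + (if k = (if i = 0 then n else i - 1) then 1 else 0))"
      by (intro sum.cong refl) (simp add: pred)
    also have "\<dots> = 2"
      using that by (auto simp: sum.distrib)
    finally show ?thesis
      using that by (simp del: replicate.simps)
  qed
  have parent: "\<forall>i<n + 1. 0 < i \<longrightarrow> (\<exists>j<i. edge_count es i j \<noteq> 0)"
  proof (intro allI impI)
    fix i assume "i < n + 1" "0 < i"
    then have "(i - 1, i) \<in> set es"
      unfolding es_def using succ[of "i - 1"] by (auto intro!: image_eqI[of _ _ "i - 1"])
    then show "\<exists>j<i. edge_count es i j \<noteq> 0"
      using \<open>0 < i\<close> by (intro exI[of _ "i - 1"]) (simp add: edge_count_eq_0_iff)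
  qed
  show ?thesis
    unfolding tA null_root_labelling.simps length_replicate
    using edges null parent
    by (intro conjI graph_connected_lessThan_by_parents) (auto simp del: replicate.simps)
qed

lemma null_root_labelling_tD:
  assumes "4 \<le> n"
  shows "null_root_labelling (tD n)"
proof -
  obtain r where r: "n = r + 4"
    using assms by (metis add.commute le_Suc_ex)
  define lab :: "nat list" where "lab = replicate (r + 1) 2 @ [1, 1, 1, 1]"
  define chain where "chain = map (\<lambda>i. (i, i + 1)) [0..<r]"
  define es where "es = chain @ [(0, r + 1), (0, r + 2), (r, r + 3), (r, r + 4)]"
  have tD: "tD n = (lab, es)"
    by (simp add: tD_def lab_def es_def chain_def r numeral_eq_Suc)
  have len: "length lab = r + 5"
    by (simp add: lab_def)
  have lab_nth: "lab ! i = (if i \<le> r then 2 else 1)" if "i < r + 5" for i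
  proof (cases "i \<le> r")
    case False
    define d where "d = i - (r + 1)"
    have "i = r + 1 + d" "d < 4"
      using False that by (simp_all add: d_def)
    then have "lab ! i = [1, 1, 1, 1] ! d"
      by (simp add: lab_def nth_append del: replicate.simps)
    also have "\<dots> = 1"
      using \<open>d < 4\<close> by (auto simp: less_Suc_eq numeral_eq_Suc)
    finally show ?thesis
      using False by simp
  qed (simp add: lab_def nth_append del: replicate.simps)
  have edges: "\<forall>(p, q)\<in>set es. p < r + 5 \<and> q < r + 5 \<and> p \<noteq> q"
    by (auto simp: es_def chain_def)
  have null: "(\<Sum>j<r + 5. edge_count es i j * lab ! j) = 2 * lab ! i" if "i < r + 5" for i
  proof -
    have "(\<Sum>(p, q)\<leftarrow>chain. (if p = i then lab ! q else 0) + (if q = i then lab ! p else 0))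
        = (\<Sum>k<r. (if k = i then 2 else 0) + (if k + 1 = i then 2 else 0))"
      by (simp add: chain_def interv_sum_list_conv_sum_set_nat lessThan_atLeast0 lab_nth
          cong: if_cong del: upt_Suc)
    also have "\<dots> = (\<Sum>k<r. (if k = i then 2 else 0)
        + (if k = i - 1 then (if 1 \<le> i then 2 else 0) else 0))"
      by (intro sum.cong refl) auto
    also have "\<dots> = (if i < r then 2 else 0) + (if 1 \<le> i \<and> i \<le> r then 2 else 0)"
      by (auto simp: sum.distrib)
    finally have "(\<Sum>(p, q)\<leftarrow>chain. (if p = i then lab ! q else 0) + (if q = i then lab ! p else 0))
        = (if i < r then 2 else 0) + (if 1 \<le> i \<and> i \<le> r then 2 else 0)" .
    moreover have "lab ! 0 = 2" "lab ! r = 2" "lab ! (r + 1) = 1" "lab ! (r + 2) = 1"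
      "lab ! (r + 3) = 1" "lab ! (r + 4) = 1"
      by (simp_all add: lab_nth)
    ultimately show ?thesis
      using that lab_nth[OF that] unfolding sum_edge_count_eq_neighbour_sum[OF edges that]
      by (auto simp: es_def)
  qed
  have parent: "\<forall>i<r + 5. 0 < i \<longrightarrow> (\<exists>j<i. edge_count es i j \<noteq> 0)"
  proof (intro allI impI)
    fix i assume "i < r + 5" "0 < i"
    have "\<exists>j<i. (j, i) \<in> set es"
    proof (cases "i \<le> r")
      case True
      then have "(i - 1, i) \<in> set es"
        using \<open>0 < i\<close> by (force simp: es_def chain_def)
      then show ?thesis
        using \<open>0 < i\<close> by (intro exI[of _ "i - 1"]) simp
    next
      case False
      then consider "i = r + 1" | "i = r + 2" | "i = r + 3" | "i = r + 4"
        using \<open>i < r + 5\<close> by linarith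
      then show ?thesis
        by cases (auto simp: es_def intro: exI[of _ r])
    qed
    then show "\<exists>j<i. edge_count es i j \<noteq> 0"
      by (auto simp: edge_count_eq_0_iff)
  qed
  show ?thesis
    unfolding tD null_root_labelling.simps len
    using edges null parent lab_nth
    by (intro conjI graph_connected_lessThan_by_parents exI[of _ "r + 1"]) simp_all
qed

lemma extended_ADE_graph_null_root_labelling:
  "extended_ADE_graph G \<Longrightarrow> null_root_labelling G"
  unfolding extended_ADE_graph_def
  using null_root_labelling_tA null_root_labelling_tD null_root_labelling_tE by blast

lemma null_root_labelling_split_pairing_ge_two:
  assumes lab: "null_root_labelling (lab, es)" and f: "bij_betw f V {0..<length lab}"
    and m: "\<forall>v\<in>V. m v = lab ! f v"
    and "\<forall>v\<in>V. A v + B v = m v" and "\<exists>v\<in>V. A v \<noteq> 0" and "\<exists>v\<in>V. B v \<noteq> 0"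
  shows "2 \<le> (\<Sum>v\<in>V. \<Sum>w\<in>V.
           int (A v) * int (B w) * (int (edge_count es (f v) (f w)) - (if v = w then 2 else 0)))"
proof (rule split_pairing_ge_two)
  let ?N = "length lab"
  have f': "bij_betw f V {..<?N}"
    using f by (simp add: lessThan_atLeast0)
  note lab = lab[unfolded null_root_labelling.simps]
  show "finite V"
    using f' bij_betw_finite by blast
  show "edge_count es (f v) (f w) = edge_count es (f w) (f v)" for v w
    by (rule edge_count_commute)
  show "edge_count es (f v) (f v) = 0" for v
    using lab by (intro edge_count_self) auto
  show "(\<Sum>w\<in>V. edge_count es (f v) (f w) * m w) = 2 * m v" if "v \<in> V" for v
  proof -
    have "(\<Sum>w\<in>V. edge_count es (f v) (f w) * m w)
        = (\<Sum>w\<in>V. edge_count es (f v) (f w) * lab ! f w)"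
      using m by simp
    also have "\<dots> = (\<Sum>j<?N. edge_count es (f v) j * lab ! j)"
      by (rule sum.reindex_bij_betw[OF f'])
    also have "\<dots> = 2 * m v"
      using lab bij_betw_apply[OF f' that] m that by simp
    finally show ?thesis .
  qed
  show "0 < m v" if "v \<in> V" for v
    using lab bij_betw_apply[OF f' that] m that by simp
  show "graph_connected V (\<lambda>v w. edge_count es (f v) (f w) \<noteq> 0)"
    using lab by (intro graph_connected_bij_betw[OF f']) simp
  obtain i where "i < ?N" "lab ! i = 1"
    using lab by blast
  then obtain v where "v \<in> V" "f v = i"
    using f' by (metis bij_betw_imp_surj_on imageE lessThan_iff)
  then show "\<exists>v\<in>V. m v = 1"
    using m \<open>lab ! i = 1\<close> by auto
qed (use assms in auto)

lemma inter_num_eq_split_pairing: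
  assumes e: "\<forall>v\<in>V. \<forall>w\<in>V. v \<noteq> w \<longrightarrow> e v w = E v w" and loopfree: "\<And>v. E v v = 0"
    and split: "\<forall>v\<in>V. A v + B v = m v" and s: "\<forall>v\<in>V. 2 \<le> m v \<longrightarrow> s v = -2"
  shows "inter_num V e s A B
         = (\<Sum>v\<in>V. \<Sum>w\<in>V. int (A v) * int (B w) * (int (E v w) - (if v = w then 2 else 0)))"
  unfolding inter_num_def
proof (intro sum.cong refl)
  fix v w assume "v \<in> V" "w \<in> V"
  show "int (A v) * int (B w) * (if v = w then s v else int (e v w))
      = int (A v) * int (B w) * (int (E v w) - (if v = w then 2 else 0))"
  proof (cases "v = w \<and> A v \<noteq> 0 \<and> B v \<noteq> 0")
    case True
    then have "s v = -2"
      using split s \<open>v \<in> V\<close> by fastforce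
    then show ?thesis
      using True loopfree by simp
  qed (use e \<open>v \<in> V\<close> \<open>w \<in> V\<close> in auto)
qed

theorem lemma3p6:
  fixes V :: "'v set" and m :: "'v \<Rightarrow> nat" and e :: "'v \<Rightarrow> 'v \<Rightarrow> nat" and s :: "'v \<Rightarrow> int"
  assumes "extended_ADE_curve V m e s"
  shows "\<forall>A B :: 'v \<Rightarrow> nat.
           (\<forall>v\<in>V. A v + B v = m v) \<and> (\<exists>v\<in>V. A v \<noteq> 0) \<and> (\<exists>v\<in>V. B v \<noteq> 0)
           \<longrightarrow> inter_num V e s A B \<ge> 2"
proof (intro allI impI)
  fix A B :: "'v \<Rightarrow> nat"
  assume AB: "(\<forall>v\<in>V. A v + B v = m v) \<and> (\<exists>v\<in>V. A v \<noteq> 0) \<and> (\<exists>v\<in>V. B v \<noteq> 0)"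
  obtain lab es f where G: "extended_ADE_graph (lab, es)" and f: "bij_betw f V {0..<length lab}"
    and m: "\<forall>v\<in>V. m v = lab ! f v"
    and e: "\<forall>v\<in>V. \<forall>w\<in>V. v \<noteq> w \<longrightarrow> e v w = edge_count es (f v) (f w)"
    and s: "\<forall>v\<in>V. 2 \<le> m v \<longrightarrow> s v = -2"
    using assms unfolding extended_ADE_curve_def by fastforce
  have lab: "null_root_labelling (lab, es)"
    using G by (rule extended_ADE_graph_null_root_labelling)
  have "inter_num V e s A B = (\<Sum>v\<in>V. \<Sum>w\<in>V.
      int (A v) * int (B w) * (int (edge_count es (f v) (f w)) - (if v = w then 2 else 0)))"
    using e AB s lab by (intro inter_num_eq_split_pairing) (auto intro: edge_count_self)
  also have "2 \<le> \<dots>"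
    using lab f m AB by (intro null_root_labelling_split_pairing_ge_two) auto
  finally show "inter_num V e s A B \<ge> 2" .
qed

end
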